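(* Fix $q\in V(G)$ and let $D\in\operatorname{Div}(G)$. Then $D$ is $q$-reduced if and only if $D\in|D|_q$ and $\mathcal{E}_q(D)<\mathcal{E}_q(D')$ for every $D'\in|D|_q$ with $D'\ne D$.
   Context: $G$ is a finite connected multigraph without loop edges, with vertex set $V(G)$ and edge set $E(G)$. A divisor is an element $D=\sum_{v}D(v)(v)$ of the free abelian group $\operatorname{Div}(G)$ on $V(G)$; $\deg(D)=\sum_vD(v)$. The Laplacian $\Delta$ sends a function $f:V(G)\to\mathbb{Q}$ to $\Delta(f)=\sum_v\Delta_v(f)(v)$ with $\Delta_v(f)=\sum_{\{v,w\}\in E(G)}(f(v)-f(w))$ (edges counted with multiplicity). $D_1\sim D_2$ means $D_1-D_2=\Delta(f)$ for some integer-valued $f$. For $q\in V(G)$, $|D|_q=\{E\in\operatorname{Div}(G): E\sim D,\ E(v)\ge 0\text{ for all }v\ne q\}$. For $A\subseteq V(G)$ and $v\in A$, $\operatorname{outdeg}_A(v)$ is the number of edges joining $v$ to $V(G)\setminus A$. A divisor $D$ is $q$-reduced if (i) $D(v)\ge 0$ for all $v\ne q$, and (ii) for every non-empty $A\subseteq V(G)\setminus\{q\}$ there is $v\in A$ with $D(v)<\operatorname{outdeg}_A(v)$. $Q$ is the Laplacian matrix with respect to a labeling of $V(G)$. For degree-zero divisors $D_1,D_2$, the energy pairing is $\langle D_1,D_2\rangle=[D_1]^TL[D_2]$ for any generalized inverse $L$ of $Q$ ($QLQ=Q$), independent of $L$. For divisors $D,E$, $\langle D,E\rangle_q=\langle D-\deg(D)(q),\,E-\deg(E)(q)\rangle$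 and $\mathcal{E}_q(D)=\langle D,D\rangle_q$. *)

theory Defs
  imports Complex_Main
begin

text \<open>A finite multigraph on the vertex type 'v (V(G) = UNIV), given by an edge
multiplicity function m: m v w = number of edges joining v and w.\<close>

definition multigraph :: "('v::finite \<Rightarrow> 'v \<Rightarrow> nat) \<Rightarrow> bool" where
  "multigraph m \<longleftrightarrow> (\<forall>v w. m v w = m w v) \<and> (\<forall>v. m v v = 0)"

definition connected_mg :: "('v::finite \<Rightarrow> 'v \<Rightarrow> nat) \<Rightarrow> bool" where
  "connected_mg m \<longleftrightarrow> (\<forall>u w. (u, w) \<in> {(a, b). 0 < m a b}\<^sup>*)"

type_synonym 'v divisor = "'v \<Rightarrow> int"

definition deg :: "'v::finite divisor \<Rightarrow> int" where
  "deg D = (\<Sum>v\<in>UNIV. D v)"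

definition laplacian :: "('v::finite \<Rightarrow> 'v \<Rightarrow> nat) \<Rightarrow> ('v \<Rightarrow> int) \<Rightarrow> 'v divisor" where
  "laplacian m f = (\<lambda>v. \<Sum>w\<in>UNIV. int (m v w) * (f v - f w))"

definition lin_equiv :: "('v::finite \<Rightarrow> 'v \<Rightarrow> nat) \<Rightarrow> 'v divisor \<Rightarrow> 'v divisor \<Rightarrow> bool" where
  "lin_equiv m D1 D2 \<longleftrightarrow> (\<exists>f::'v \<Rightarrow> int. (\<lambda>v. D1 v - D2 v) = laplacian m f)"

definition lin_system_q :: "('v::finite \<Rightarrow> 'v \<Rightarrow> nat) \<Rightarrow> 'v \<Rightarrow> 'v divisor \<Rightarrow> 'v divisor set" where
  "lin_system_q m q D = {E. lin_equiv m E D \<and> (\<forall>v. v \<noteq> q \<longrightarrow> 0 \<le> E v)}"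

definition outdeg :: "('v::finite \<Rightarrow> 'v \<Rightarrow> nat) \<Rightarrow> 'v set \<Rightarrow> 'v \<Rightarrow> nat" where
  "outdeg m A v = (\<Sum>w\<in>UNIV - A. m v w)"

definition q_reduced :: "('v::finite \<Rightarrow> 'v \<Rightarrow> nat) \<Rightarrow> 'v \<Rightarrow> 'v divisor \<Rightarrow> bool" where
  "q_reduced m q D \<longleftrightarrow> (\<forall>v. v \<noteq> q \<longrightarrow> 0 \<le> D v) \<and>
     (\<forall>A. A \<noteq> {} \<and> A \<subseteq> UNIV - {q} \<longrightarrow> (\<exists>v\<in>A. D v < int (outdeg m A v)))"

definition lap_matrix :: "('v::finite \<Rightarrow> 'v \<Rightarrow> nat) \<Rightarrow> 'v \<Rightarrow> 'v \<Rightarrow> rat" where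
  "lap_matrix m i j = (if i = j then of_nat (\<Sum>w\<in>UNIV. m i w) else - of_nat (m i j))"

definition gen_inverse :: "('v::finite \<Rightarrow> 'v \<Rightarrow> rat) \<Rightarrow> ('v \<Rightarrow> 'v \<Rightarrow> rat) \<Rightarrow> bool" where
  "gen_inverse Q L \<longleftrightarrow> (\<forall>i j. (\<Sum>k\<in>UNIV. \<Sum>l\<in>UNIV. Q i k * L k l * Q l j) = Q i j)"

definition energy_pairing :: "('v::finite \<Rightarrow> 'v \<Rightarrow> nat) \<Rightarrow> 'v divisor \<Rightarrow> 'v divisor \<Rightarrow> rat" where
  "energy_pairing m D1 D2 =
     (let L = (SOME L. gen_inverse (lap_matrix m) L)
      in \<Sum>i\<in>UNIV. \<Sum>j\<in>UNIV. of_int (D1 i) * L i j * of_int (D2 j))"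

definition shift_q :: "'v::finite \<Rightarrow> 'v divisor \<Rightarrow> 'v divisor" where
  "shift_q q D = (\<lambda>v. D v - (if v = q then deg D else 0))"

definition pairing_q :: "('v::finite \<Rightarrow> 'v \<Rightarrow> nat) \<Rightarrow> 'v \<Rightarrow> 'v divisor \<Rightarrow> 'v divisor \<Rightarrow> rat" where
  "pairing_q m q D E = energy_pairing m (shift_q q D) (shift_q q E)"

definition energy_q :: "('v::finite \<Rightarrow> 'v \<Rightarrow> nat) \<Rightarrow> 'v \<Rightarrow> 'v divisor \<Rightarrow> rat" where
  "energy_q m q D = pairing_q m q D D"

end

theory Submission
  imports Defs "HOL-Analysis.Cartesian_Space"
begin

(* We work with the rational Laplacian operator g \<mapsto> Q g.  On a connected graph it is
   self-adjoint, its quadratic form is the Dirichlet sum of m(v,w) (g v - g w)^2 (hence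
   nonnegative), its kernel consists of the constants and its range of the vectors of sum
   zero.  Consequently a generalized inverse L of Q exists, and for degree-zero a = Q g,
   b = Q h the pairing a^T L b equals g^T Q h; in particular E_q(X) = g^T Q g for any
   "potential" g of X - deg(X)(q), so energies are nonnegative.

   Firing a set of vertices A (subtracting the Laplacian of its indicator) keeps a divisor in
   its linear system, and if every v in A has X v >= outdeg_A(v) the energy drops by
   2 X(A) - outdeg(A) >= 1.  Together with the uniqueness of q-reduced divisors in a linear
   system this gives a descent: from every X in |D|_q one reaches the reduced divisor, with
   strictly smaller energy unless X is already reduced.  The main theorem follows: a reduced
   divisor is the unique energy minimiser, and a non-reduced one admits a set firing that
   lowers its energy. *)

section \<open>The rational Laplacian operator\<close>

definition lap_apply :: "('v::finite \<Rightarrow> 'v \<Rightarrow> nat) \<Rightarrow> ('v \<Rightarrow> rat) \<Rightarrow> 'v \<Rightarrow> rat" where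
  "lap_apply m g i = (\<Sum>k\<in>UNIV. lap_matrix m i k * g k)"

lemma lap_apply_explicit:
  assumes "multigraph m"
  shows "lap_apply m g i = (\<Sum>w\<in>UNIV. of_nat (m i w) * (g i - g w))"
proof -
  have mii: "m i i = 0" using assms by (simp add: multigraph_def)
  have "\<And>k. lap_matrix m i k * g k
            = (if k = i then of_nat (\<Sum>w\<in>UNIV. m i w) * g i else 0) - of_nat (m i k) * g k"
    using mii by (auto simp: lap_matrix_def)
  hence "lap_apply m g i = of_nat (\<Sum>w\<in>UNIV. m i w) * g i - (\<Sum>k\<in>UNIV. of_nat (m i k) * g k)"
    unfolding lap_apply_def by (simp add: sum_subtractf)
  also have "\<dots> = (\<Sum>w\<in>UNIV. of_nat (m i w) * (g i - g w))"
    by (simp add: right_diff_distrib sum_subtractf sum_distrib_right)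
  finally show ?thesis .
qed

lemma lap_matrix_sym: "multigraph m \<Longrightarrow> lap_matrix m i j = lap_matrix m j i"
  by (auto simp: lap_matrix_def multigraph_def)

lemma lap_apply_diff: "lap_apply m (\<lambda>i. g i - h i) v = lap_apply m g v - lap_apply m h v"
  by (simp add: lap_apply_def sum_subtractf right_diff_distrib)

lemma lap_apply_of_int:
  assumes "multigraph m"
  shows "of_int (laplacian m f v) = lap_apply m (\<lambda>i. of_int (f i)) v"
  by (simp add: lap_apply_explicit[OF assms] laplacian_def)

lemma lap_apply_self_adjoint:
  assumes "multigraph m"
  shows "(\<Sum>i\<in>UNIV. f i * lap_apply m g i) = (\<Sum>i\<in>UNIV. lap_apply m f i * g i)"
proof -
  have "(\<Sum>i\<in>UNIV. f i * lap_apply m g i) = (\<Sum>i\<in>UNIV. \<Sum>k\<in>UNIV. f i * lap_matrix m i k * g k)"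
    by (simp add: lap_apply_def sum_distrib_left mult.assoc)
  also have "\<dots> = (\<Sum>k\<in>UNIV. \<Sum>i\<in>UNIV. f i * lap_matrix m i k * g k)"
    by (rule sum.swap)
  also have "\<dots> = (\<Sum>k\<in>UNIV. lap_apply m f k * g k)"
    by (simp add: lap_apply_def sum_distrib_left sum_distrib_right lap_matrix_sym[OF assms] ac_simps)
  finally show ?thesis .
qed

text \<open>Every vector in the range of Q has coordinate sum zero (constants lie in the kernel).\<close>
lemma lap_apply_sum_zero:
  assumes "multigraph m"
  shows "(\<Sum>i\<in>UNIV. lap_apply m g i) = 0"
proof -
  have "(\<Sum>i\<in>UNIV. lap_apply m g i) = (\<Sum>i\<in>UNIV. (\<lambda>_. 1) i * lap_apply m g i)" by simp
  also have "\<dots> = (\<Sum>i\<in>UNIV. lap_apply m (\<lambda>_. 1) i * g i)"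
    by (rule lap_apply_self_adjoint[OF assms])
  also have "\<dots> = 0" by (simp add: lap_apply_explicit[OF assms])
  finally show ?thesis .
qed

lemma dirichlet_form:
  assumes "multigraph m"
  shows "2 * (\<Sum>i\<in>UNIV. g i * lap_apply m g i)
           = (\<Sum>i\<in>UNIV. \<Sum>w\<in>UNIV. of_nat (m i w) * (g i - g w)^2)"
proof -
  have msym: "\<And>i w. m i w = m w i" using assms by (simp add: multigraph_def)
  have e1: "(\<Sum>i\<in>UNIV. g i * lap_apply m g i)
              = (\<Sum>i\<in>UNIV. \<Sum>w\<in>UNIV. of_nat (m i w) * (g i - g w) * g i)"
    by (simp add: lap_apply_explicit[OF assms] sum_distrib_left mult.commute mult.left_commute)
  have "(\<Sum>i\<in>UNIV. \<Sum>w\<in>UNIV. of_nat (m i w) * (g i - g w) * g i)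
          = (\<Sum>w\<in>UNIV. \<Sum>i\<in>UNIV. of_nat (m w i) * (g i - g w) * g i)"
    by (subst sum.swap) (simp add: msym)
  hence e2: "(\<Sum>i\<in>UNIV. g i * lap_apply m g i)
              = (\<Sum>i\<in>UNIV. \<Sum>w\<in>UNIV. - (of_nat (m i w) * (g i - g w) * g w))"
    using e1 by (simp add: algebra_simps)
  have "2 * (\<Sum>i\<in>UNIV. g i * lap_apply m g i)
          = (\<Sum>i\<in>UNIV. \<Sum>w\<in>UNIV. of_nat (m i w) * (g i - g w) * g i
                                  + - (of_nat (m i w) * (g i - g w) * g w))"
    by (subst mult_2, subst (2) e1, subst e2) (simp only: sum.distrib)
  also have "\<dots> = (\<Sum>i\<in>UNIV. \<Sum>w\<in>UNIV. of_nat (m i w) * (g i - g w)^2)"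
    by (simp add: power2_eq_square algebra_simps)
  finally show ?thesis .
qed

lemma lap_quadratic_nonneg:
  assumes "multigraph m"
  shows "0 \<le> (\<Sum>i\<in>UNIV. g i * lap_apply m g i)"
proof -
  have "0 \<le> (\<Sum>i\<in>UNIV. \<Sum>w\<in>UNIV. of_nat (m i w) * (g i - g w)^2 :: rat)"
    by (intro sum_nonneg) auto
  thus ?thesis using dirichlet_form[OF assms, of g] by linarith
qed

lemma constant_along_edges:
  assumes "connected_mg m" and "\<And>i w. 0 < m i w \<Longrightarrow> g i = g w"
  shows "g u = g w"
proof -
  have "(u, w) \<in> {(a, b). 0 < m a b}\<^sup>*" using assms(1) by (simp add: connected_mg_def)
  thus ?thesis by (induction rule: rtrancl_induct) (auto dest: assms(2))
qed

lemma lap_apply_kernel: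
  assumes "multigraph m" "connected_mg m" "\<And>i. lap_apply m g i = 0"
  shows "g u = g w"
proof (rule constant_along_edges[OF assms(2)])
  fix i w assume edge: "0 < m i w"
  have "(\<Sum>i\<in>UNIV. \<Sum>w\<in>UNIV. of_nat (m i w) * (g i - g w)^2 :: rat) = 0"
    using dirichlet_form[OF assms(1), of g] assms(3) by simp
  hence "(\<Sum>w\<in>UNIV. of_nat (m i w) * (g i - g w)^2 :: rat) = 0"
    by (subst (asm) sum_nonneg_eq_0_iff) (auto intro: sum_nonneg)
  hence "of_nat (m i w) * (g i - g w)^2 = (0::rat)"
    by (subst (asm) sum_nonneg_eq_0_iff) auto
  thus "g i = g w" using edge by simp
qed

text \<open>On a connected graph the range of Q is exactly the sum-zero vectors.  Replacing the
  row of a vertex q by the unit row gives an injective, hence surjective, square matrix.\<close>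
lemma lap_apply_onto:
  fixes b :: "'v::finite \<Rightarrow> rat"
  assumes mg: "multigraph m" and cn: "connected_mg m" and b0: "(\<Sum>i\<in>UNIV. b i) = 0"
  shows "\<exists>g. lap_apply m g = b"
proof -
  fix q :: 'v
  define A :: "rat^'v^'v" where
    "A = (\<chi> i j. if i = q then (if j = q then 1 else 0) else lap_matrix m i j)"
  have Av: "(A *v x) $ i = (if i = q then x $ q else lap_apply m (vec_nth x) i)" for x i
  proof (cases "i = q")
    case True
    have "(\<Sum>j\<in>UNIV. (if j = q then 1 else 0) * x $ j) = (\<Sum>j\<in>UNIV. if j = q then x $ q else 0)"
      by (intro sum.cong) auto
    hence "(\<Sum>j\<in>UNIV. (if j = q then 1 else 0) * x $ j) = x $ q" by simp
    thus ?thesis using True by (simp add: A_def matrix_vector_mult_def)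
  qed (simp add: A_def matrix_vector_mult_def lap_apply_def)
  (* the value of Q g at q is forced by its values elsewhere, as Q g has sum zero *)
  have determined: "lap_apply m g q = c q"
    if "\<And>i. i \<noteq> q \<Longrightarrow> lap_apply m g i = c i" and "(\<Sum>i\<in>UNIV. c i) = 0" for g c
  proof -
    have split_q: "(\<Sum>i\<in>UNIV. h i) = h q + (\<Sum>i\<in>UNIV - {q}. h i)" for h :: "'v \<Rightarrow> rat"
      by (simp add: sum.remove)
    have "(\<Sum>i\<in>UNIV - {q}. lap_apply m g i) = (\<Sum>i\<in>UNIV - {q}. c i)"
      using that(1) by (intro sum.cong) auto
    thus ?thesis
      using lap_apply_sum_zero[OF mg, of g] that(2) split_q[of c] split_q[of "lap_apply m g"]
      by linarith
  qed
  have "inj ((*v) A)"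
  proof (rule injI)
    fix x y assume "A *v x = A *v y"
    hence Axy: "A *v (x - y) = 0" by (simp add: matrix_vector_mult_diff_distrib)
    hence "lap_apply m (vec_nth (x - y)) i = 0" for i
      using determined[of "vec_nth (x - y)" "\<lambda>_. 0"] Av[of "x - y"]
      by (metis sum.neutral_const zero_index)
    hence "(x - y) $ u = (x - y) $ q" for u using lap_apply_kernel[OF mg cn] by blast
    moreover have "(x - y) $ q = 0" using Av[of "x - y" q] Axy by simp
    ultimately show "x = y" by (simp add: vec_eq_iff)
  qed
  hence "surj ((*v) A)"
    by (rule vec.linear_inj_imp_surj[OF matrix_vector_mul_linear_gen])
  then obtain x where x: "A *v x = (\<chi> i. if i = q then 0 else b i)"
    by (metis surjD)
  have off_q: "lap_apply m (vec_nth x) i = b i" if "i \<noteq> q" for i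
    using arg_cong[OF x, of "\<lambda>v. v $ i"] Av[of x i] that by simp
  have "lap_apply m (vec_nth x) = b"
    using off_q determined[OF off_q b0] by (metis ext)
  thus ?thesis by blast
qed

section \<open>The energy pairing through potentials\<close>

text \<open>Q has a generalized inverse: choose potentials of the degree-zero vectors e_l - e_q.\<close>
lemma gen_inverse_exists:
  assumes mg: "multigraph m" and cn: "connected_mg m"
  shows "\<exists>L. gen_inverse (lap_matrix m) (L :: 'v::finite \<Rightarrow> 'v \<Rightarrow> rat)"
proof -
  fix q :: 'v
  define e where "e l = (\<lambda>i::'v. (if i = l then 1 else 0) - (if i = q then 1 else (0::rat)))" for l
  have "\<forall>l. \<exists>g. lap_apply m g = e l"
    using lap_apply_onto[OF mg cn] by (simp add: e_def sum_subtractf)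
  then obtain pot where pot: "lap_apply m (pot l) = e l" for l
    by (auto simp: choice_iff)
  define L where "L k l = pot l k" for k l
  have col_sum: "(\<Sum>l\<in>UNIV. lap_matrix m l j) = 0" for j
  proof -
    have "(\<Sum>l\<in>UNIV. lap_matrix m l j) = lap_apply m (\<lambda>_. 1) j"
      by (simp add: lap_apply_def lap_matrix_sym[OF mg])
    thus ?thesis by (simp add: lap_apply_explicit[OF mg])
  qed
  have "(\<Sum>k\<in>UNIV. \<Sum>l\<in>UNIV. lap_matrix m i k * L k l * lap_matrix m l j) = lap_matrix m i j"
    for i j
  proof -
    have "(\<Sum>k\<in>UNIV. \<Sum>l\<in>UNIV. lap_matrix m i k * L k l * lap_matrix m l j)
        = (\<Sum>l\<in>UNIV. lap_apply m (pot l) i * lap_matrix m l j)"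
      by (subst sum.swap) (simp add: lap_apply_def L_def sum_distrib_right)
    also have "\<dots> = (\<Sum>l\<in>UNIV. (if l = i then lap_matrix m i j else 0)
                              - (if i = q then lap_matrix m l j else 0))"
      by (intro sum.cong) (auto simp: pot e_def)
    also have "\<dots> = lap_matrix m i j"
      using col_sum by (cases "i = q") (simp_all add: sum_subtractf)
    finally show ?thesis .
  qed
  thus ?thesis unfolding gen_inverse_def by blast
qed

lemma sum4_swap:
  "(\<Sum>i\<in>A. \<Sum>j\<in>B. \<Sum>k\<in>C. \<Sum>l\<in>D. f i j k l) = (\<Sum>k\<in>C. \<Sum>l\<in>D. \<Sum>i\<in>A. \<Sum>j\<in>B. f i j k l)"
proof -
  have "(\<Sum>i\<in>A. \<Sum>j\<in>B. \<Sum>k\<in>C. \<Sum>l\<in>D. f i j k l) = (\<Sum>i\<in>A. \<Sum>k\<in>C. \<Sum>j\<in>B. \<Sum>l\<in>D. f i j k l)"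
    by (rule sum.cong[OF refl], rule sum.swap)
  also have "\<dots> = (\<Sum>k\<in>C. \<Sum>i\<in>A. \<Sum>l\<in>D. \<Sum>j\<in>B. f i j k l)"
    by (subst sum.swap) (rule sum.cong[OF refl], rule sum.cong[OF refl], rule sum.swap)
  also have "\<dots> = (\<Sum>k\<in>C. \<Sum>l\<in>D. \<Sum>i\<in>A. \<Sum>j\<in>B. f i j k l)"
    by (rule sum.cong[OF refl], rule sum.swap)
  finally show ?thesis .
qed

lemma gen_inverse_pairing:
  assumes mg: "multigraph m" and L: "gen_inverse (lap_matrix m) L"
  shows "(\<Sum>i\<in>UNIV. \<Sum>j\<in>UNIV. lap_apply m g i * L i j * lap_apply m h j)
           = (\<Sum>k\<in>UNIV. g k * lap_apply m h k)"
proof -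
  let ?Q = "lap_matrix m"
  have transposed: "lap_apply m g i = (\<Sum>k\<in>UNIV. g k * ?Q k i)" for i
    by (simp add: lap_apply_def lap_matrix_sym[OF mg] mult.commute)
  have "(\<Sum>i\<in>UNIV. \<Sum>j\<in>UNIV. lap_apply m g i * L i j * lap_apply m h j)
      = (\<Sum>i\<in>UNIV. \<Sum>j\<in>UNIV. \<Sum>k\<in>UNIV. \<Sum>l\<in>UNIV. g k * h l * (?Q k i * L i j * ?Q j l))"
    unfolding transposed by (simp add: lap_apply_def sum_distrib_left sum_distrib_right ac_simps)
  also have "\<dots> = (\<Sum>k\<in>UNIV. \<Sum>l\<in>UNIV. \<Sum>i\<in>UNIV. \<Sum>j\<in>UNIV. g k * h l * (?Q k i * L i j * ?Q j l))"
    by (rule sum4_swap)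
  also have "\<dots> = (\<Sum>k\<in>UNIV. \<Sum>l\<in>UNIV. g k * h l * ?Q k l)"
    using L by (simp add: gen_inverse_def sum_distrib_left[symmetric])
  also have "\<dots> = (\<Sum>k\<in>UNIV. g k * lap_apply m h k)"
    by (simp add: lap_apply_def sum_distrib_left ac_simps)
  finally show ?thesis .
qed

definition potential :: "('v::finite \<Rightarrow> 'v \<Rightarrow> nat) \<Rightarrow> 'v \<Rightarrow> 'v divisor \<Rightarrow> ('v \<Rightarrow> rat) \<Rightarrow> bool" where
  "potential m q X g \<longleftrightarrow> (\<forall>i. lap_apply m g i = of_int (shift_q q X i))"

text \<open>Every divisor has a potential, as X - deg(X)(q) has degree zero.\<close>
lemma potential_exists:
  assumes "multigraph m" and "connected_mg m"
  shows "\<exists>g. potential m q X g"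
proof -
  have "(\<Sum>i\<in>UNIV. (of_int (shift_q q X i) :: rat)) = 0"
    by (simp add: shift_q_def sum_subtractf deg_def flip: of_int_sum)
  from lap_apply_onto[OF assms this] show ?thesis
    unfolding potential_def by metis
qed

lemma energy_q_potential:
  assumes mg: "multigraph m" and cn: "connected_mg m" and g: "potential m q X g"
  shows "energy_q m q X = (\<Sum>i\<in>UNIV. g i * lap_apply m g i)"
proof -
  define L where "L = (SOME L. gen_inverse (lap_matrix m) L)"
  have L: "gen_inverse (lap_matrix m) L"
    unfolding L_def by (rule someI_ex[OF gen_inverse_exists[OF mg cn]])
  have "energy_q m q X = (\<Sum>i\<in>UNIV. \<Sum>j\<in>UNIV. lap_apply m g i * L i j * lap_apply m g j)"
    using g by (simp add: energy_q_def pairing_q_def energy_pairing_def potential_def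
                          Let_def L_def[symmetric])
  also have "\<dots> = (\<Sum>i\<in>UNIV. g i * lap_apply m g i)" by (rule gen_inverse_pairing[OF mg L])
  finally show ?thesis .
qed

text \<open>Energies are nonnegative; this bounds the descent below.\<close>
lemma energy_q_nonneg:
  assumes "multigraph m" and "connected_mg m"
  shows "0 \<le> energy_q m q X"
  using potential_exists[OF assms] energy_q_potential[OF assms] lap_quadratic_nonneg[OF assms(1)]
  by metis

section \<open>Linear equivalence and firing\<close>

lemma laplacian_sum_zero:
  assumes "multigraph m"
  shows "(\<Sum>v\<in>UNIV. laplacian m f v) = 0"
proof -
  have "(of_int (\<Sum>v\<in>UNIV. laplacian m f v) :: rat) = 0"
    using lap_apply_sum_zero[OF assms] by (simp add: lap_apply_of_int[OF assms])
  thus ?thesis by (simp only: of_int_eq_0_iff)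
qed

lemma laplacian_neg: "laplacian m (\<lambda>v. - f v) v = - laplacian m f v"
  by (simp add: laplacian_def sum_negf[symmetric] algebra_simps)

lemma laplacian_add: "laplacian m (\<lambda>v. f v + g v) v = laplacian m f v + laplacian m g v"
  by (simp add: laplacian_def sum.distrib[symmetric] algebra_simps)

lemma lin_equiv_refl: "lin_equiv m X X"
  unfolding lin_equiv_def by (rule exI[of _ "\<lambda>_. 0"]) (simp add: fun_eq_iff laplacian_def)

lemma lin_equiv_trans:
  assumes "lin_equiv m X Y" and "lin_equiv m Y Z"
  shows "lin_equiv m X Z"
proof -
  obtain f g where f: "(\<lambda>v. X v - Y v) = laplacian m f" and g: "(\<lambda>v. Y v - Z v) = laplacian m g"
    using assms by (auto simp: lin_equiv_def)
  have "X v - Z v = laplacian m (\<lambda>v. f v + g v) v" for v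
    using fun_cong[OF f, of v] fun_cong[OF g, of v] unfolding laplacian_add by linarith
  hence "(\<lambda>v. X v - Z v) = laplacian m (\<lambda>v. f v + g v)" by blast
  thus ?thesis by (auto simp: lin_equiv_def)
qed

lemma energy_q_fire:
  assumes mg: "multigraph m" and cn: "connected_mg m"
  shows "energy_q m q (\<lambda>v. X v - laplacian m f v)
           = energy_q m q X - 2 * of_int (\<Sum>i\<in>UNIV. f i * shift_q q X i)
             + of_int (\<Sum>i\<in>UNIV. f i * laplacian m f i)"
proof -
  define X' where "X' = (\<lambda>v. X v - laplacian m f v)"
  define fr :: "_ \<Rightarrow> rat" where "fr = (\<lambda>i. of_int (f i))"
  obtain g where g: "potential m q X g" using potential_exists[OF mg cn] by blast
  define g' where "g' = (\<lambda>i. g i - fr i)"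
  have "deg X' = deg X"
    using laplacian_sum_zero[OF mg, of f] by (simp add: deg_def X'_def sum_subtractf)
  hence g': "potential m q X' g'"
    using g by (simp add: potential_def g'_def lap_apply_diff shift_q_def X'_def
                          lap_apply_of_int[OF mg] fr_def)
  have cross: "(\<Sum>i\<in>UNIV. g i * lap_apply m fr i) = (\<Sum>i\<in>UNIV. fr i * lap_apply m g i)"
    using lap_apply_self_adjoint[OF mg, of g fr] by (simp add: mult.commute)
  have "energy_q m q X' = (\<Sum>i\<in>UNIV. g' i * lap_apply m g' i)"
    by (rule energy_q_potential[OF mg cn g'])
  also have "\<dots> = (\<Sum>i\<in>UNIV. g i * lap_apply m g i) - (\<Sum>i\<in>UNIV. g i * lap_apply m fr i)
                   - (\<Sum>i\<in>UNIV. fr i * lap_apply m g i) + (\<Sum>i\<in>UNIV. fr i * lap_apply m fr i)"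
    by (simp add: g'_def lap_apply_diff algebra_simps sum.distrib sum_subtractf)
  also have "\<dots> = (\<Sum>i\<in>UNIV. g i * lap_apply m g i) - 2 * (\<Sum>i\<in>UNIV. fr i * lap_apply m g i)
                   + (\<Sum>i\<in>UNIV. fr i * lap_apply m fr i)"
    using cross by simp
  also have "\<dots> = energy_q m q X - 2 * of_int (\<Sum>i\<in>UNIV. f i * shift_q q X i)
                   + of_int (\<Sum>i\<in>UNIV. f i * laplacian m f i)"
    using g by (simp add: energy_q_potential[OF mg cn g] potential_def fr_def
                          lap_apply_of_int[OF mg, symmetric])
  finally show ?thesis by (simp add: X'_def)
qed

text \<open>Firing a set A of vertices: each vertex of A sends one chip along every edge leaving A.\<close>
definition set_fire :: "('v::finite \<Rightarrow> 'v \<Rightarrow> nat) \<Rightarrow> 'v set \<Rightarrow> 'v divisor \<Rightarrow> 'v divisor" where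
  "set_fire m A X = (\<lambda>v. X v - laplacian m (\<lambda>w. if w \<in> A then 1 else 0) v)"

lemma laplacian_indicator_inside:
  assumes "v \<in> A"
  shows "laplacian m (\<lambda>w. if w \<in> A then 1 else 0) v = int (outdeg m A v)"
proof -
  have "laplacian m (\<lambda>w. if w \<in> A then 1 else 0) v = (\<Sum>w\<in>UNIV - A. int (m v w))"
    unfolding laplacian_def using assms by (simp add: if_distrib sum.If_cases Diff_eq)
  thus ?thesis by (simp add: outdeg_def)
qed

lemma laplacian_indicator_outside:
  assumes "v \<notin> A"
  shows "laplacian m (\<lambda>w. if w \<in> A then 1 else 0) v \<le> 0"
  unfolding laplacian_def using assms by (intro sum_nonpos) auto

lemma set_fire_lin_equiv: "lin_equiv m (set_fire m A X) X"
  unfolding lin_equiv_def set_fire_def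
  by (rule exI[of _ "\<lambda>v. - (if v \<in> A then 1 else 0)"]) (simp add: laplacian_neg fun_eq_iff)

lemma set_fire_effective:
  assumes X0: "\<forall>v. v \<noteq> q \<longrightarrow> 0 \<le> X v" and afford: "\<forall>v\<in>A. int (outdeg m A v) \<le> X v"
  shows "\<forall>v. v \<noteq> q \<longrightarrow> 0 \<le> set_fire m A X v"
proof (intro allI impI)
  fix v assume "v \<noteq> q"
  show "0 \<le> set_fire m A X v"
  proof (cases "v \<in> A")
    case True
    thus ?thesis using afford laplacian_indicator_inside[OF True, of m] by (simp add: set_fire_def)
  next
    case False
    have "0 \<le> X v" using X0 \<open>v \<noteq> q\<close> by blast
    thus ?thesis using laplacian_indicator_outside[OF False, of m] by (simp add: set_fire_def)
  qed
qed

lemma outdeg_positive: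
  assumes cn: "connected_mg m" and "a \<in> A" and "q \<notin> A"
  shows "\<exists>v\<in>A. 0 < outdeg m A v"
proof -
  have leave: "\<exists>v\<in>A. \<exists>w. w \<notin> A \<and> 0 < m v w"
    if "(a, y) \<in> {(a, b). 0 < m a b}\<^sup>*" and "y \<notin> A" for y
    using that by (induction rule: rtrancl_induct) (use assms(2) in auto)
  have "(a, q) \<in> {(a, b). 0 < m a b}\<^sup>*" using cn by (simp add: connected_mg_def)
  then obtain v w where "v \<in> A" "w \<notin> A" "0 < m v w"
    using leave assms(3) by blast
  moreover have "m v w \<le> outdeg m A v"
    unfolding outdeg_def using \<open>w \<notin> A\<close> by (intro member_le_sum) auto
  ultimately show ?thesis by (blast intro: less_le_trans)
qed

text \<open>Firing an affordable set A avoiding q lowers the energy by 2 X(A) - outdeg(A) \<ge> 1.\<close>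
lemma set_fire_energy:
  assumes mg: "multigraph m" and cn: "connected_mg m"
    and A: "A \<noteq> {}" "q \<notin> A" and afford: "\<forall>v\<in>A. int (outdeg m A v) \<le> X v"
  shows "energy_q m q (set_fire m A X) \<le> energy_q m q X - 1"
proof -
  let ?\<chi> = "\<lambda>w. if w \<in> A then 1 else (0::int)"
  have "(\<Sum>i\<in>UNIV. ?\<chi> i * shift_q q X i) = (\<Sum>i\<in>A. shift_q q X i)"
    by (simp add: if_distrib[where f="\<lambda>x. x * _"] sum.If_cases)
  also have "\<dots> = (\<Sum>i\<in>A. X i)" using A(2) by (intro sum.cong) (auto simp: shift_q_def)
  finally have s1: "(\<Sum>i\<in>UNIV. ?\<chi> i * shift_q q X i) = (\<Sum>i\<in>A. X i)" .
  have s2: "(\<Sum>i\<in>UNIV. ?\<chi> i * laplacian m ?\<chi> i) = (\<Sum>i\<in>A. int (outdeg m A i))"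
    by (simp add: if_distrib[where f="\<lambda>x. x * _"] sum.If_cases laplacian_indicator_inside)
  have gain_nonneg: "0 \<le> 2 * X i - int (outdeg m A i)" if "i \<in> A" for i
  proof -
    have "int (outdeg m A i) \<le> X i" using afford that by blast
    thus ?thesis by linarith
  qed
  obtain v where vA: "v \<in> A" and "0 < outdeg m A v"
    using outdeg_positive[OF cn _ A(2)] A(1) by blast
  moreover have "int (outdeg m A v) \<le> X v" using afford vA by blast
  ultimately have "1 \<le> 2 * X v - int (outdeg m A v)" by linarith
  also have "\<dots> \<le> (\<Sum>i\<in>A. 2 * X i - int (outdeg m A i))"
    by (rule member_le_sum) (use vA gain_nonneg in auto)
  finally have "1 \<le> 2 * (\<Sum>i\<in>A. X i) - (\<Sum>i\<in>A. int (outdeg m A i))"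
    by (simp only: sum_subtractf sum_distrib_left)
  hence "(of_int 1 :: rat) \<le> of_int (2 * (\<Sum>i\<in>A. X i) - (\<Sum>i\<in>A. int (outdeg m A i)))"
    by (simp only: of_int_le_iff)
  hence gain: "(1::rat) \<le> 2 * of_int (\<Sum>i\<in>A. X i) - of_int (\<Sum>i\<in>A. int (outdeg m A i))"
    by (simp only: of_int_1 of_int_diff of_int_mult of_int_numeral)
  have "energy_q m q (set_fire m A X)
          = energy_q m q X - 2 * of_int (\<Sum>i\<in>A. X i) + of_int (\<Sum>i\<in>A. int (outdeg m A i))"
    by (simp only: set_fire_def energy_q_fire[OF mg cn] s1 s2)
  with gain show ?thesis by linarith
qed

section \<open>Reduced divisors\<close>

lemma not_reduced_affordable_set:
  assumes "\<forall>v. v \<noteq> q \<longrightarrow> 0 \<le> X v" and "\<not> q_reduced m q X"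
  obtains A where "A \<noteq> {}" "q \<notin> A" "\<forall>v\<in>A. int (outdeg m A v) \<le> X v"
  using assms unfolding q_reduced_def by (auto simp: not_less)

text \<open>If D' = D + \<Delta>h is q-reduced and D is effective off q, then h attains its maximum at q:
  otherwise the set where h is maximal violates reducedness of D'.\<close>
lemma reduced_potential_max:
  assumes D0: "\<forall>v. v \<noteq> q \<longrightarrow> 0 \<le> D v"
    and red: "q_reduced m q D'" and eq: "\<forall>v. D' v = D v + laplacian m h v"
  shows "h v \<le> h q"
proof (rule ccontr)
  assume "\<not> h v \<le> h q"
  define M where "M = Max (range h)"
  have Mge: "h w \<le> M" for w unfolding M_def by (rule Max_ge) auto
  define A where "A = {w. h w = M}"
  have "M \<in> range h" unfolding M_def by (rule Max_in) auto
  hence "A \<noteq> {}" by (auto simp: A_def)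
  moreover have qA: "q \<notin> A" using \<open>\<not> h v \<le> h q\<close> Mge[of v] by (auto simp: A_def)
  ultimately obtain u where uA: "u \<in> A" and lt: "D' u < int (outdeg m A u)"
    using red unfolding q_reduced_def by blast
  have "int (outdeg m A u) = (\<Sum>w\<in>UNIV. if w \<in> A then 0 else int (m u w))"
    by (simp add: outdeg_def sum.If_cases Diff_eq)
  also have "\<dots> \<le> (\<Sum>w\<in>UNIV. int (m u w) * (h u - h w))"
  proof (rule sum_mono)
    fix w
    show "(if w \<in> A then 0 else int (m u w)) \<le> int (m u w) * (h u - h w)"
    proof (cases "w \<in> A")
      case False
      hence "1 \<le> h u - h w" using uA Mge[of w] by (auto simp: A_def)
      hence "int (m u w) * 1 \<le> int (m u w) * (h u - h w)" by (intro mult_left_mono) auto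
      thus ?thesis using False by simp
    qed (use uA in \<open>simp add: A_def\<close>)
  qed
  also have "\<dots> = laplacian m h u" by (simp add: laplacian_def)
  finally have "int (outdeg m A u) \<le> laplacian m h u" .
  moreover have "0 \<le> D u" using D0 uA qA by auto
  ultimately show False using lt spec[OF eq, of u] by linarith
qed

lemma reduced_unique:
  assumes r1: "q_reduced m q D" and r2: "q_reduced m q D'" and equiv: "lin_equiv m D' D"
  shows "D' = D"
proof -
  obtain f where f: "(\<lambda>v. D' v - D v) = laplacian m f" using equiv by (auto simp: lin_equiv_def)
  have e1: "\<forall>v. D' v = D v + laplacian m f v"
    using fun_cong[OF f] by (simp add: algebra_simps)
  have e2: "\<forall>v. D v = D' v + laplacian m (\<lambda>v. - f v) v"
    using e1 by (simp add: laplacian_neg)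
  have D0: "\<forall>v. v \<noteq> q \<longrightarrow> 0 \<le> D v" and D'0: "\<forall>v. v \<noteq> q \<longrightarrow> 0 \<le> D' v"
    using r1 r2 by (simp_all add: q_reduced_def)
  have up: "f v \<le> f q" for v by (rule reduced_potential_max[OF D0 r2 e1])
  have down: "- f v \<le> - f q" for v by (rule reduced_potential_max[OF D'0 r1 e2])
  define c where "c = f q"
  have "f v = c" for v using up[of v] down[of v] unfolding c_def by linarith
  hence "laplacian m f v = 0" for v by (simp add: laplacian_def)
  with e1 show ?thesis by (simp add: fun_eq_iff)
qed

text \<open>The induction is on the integer part of the energy, which drops by at least one per firing.\<close>
lemma reduced_by_descent:
  assumes mg: "multigraph m" and cn: "connected_mg m" and X0: "\<forall>v. v \<noteq> q \<longrightarrow> 0 \<le> X v"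
  shows "\<exists>R. q_reduced m q R \<and> lin_equiv m R X \<and> (R \<noteq> X \<longrightarrow> energy_q m q R < energy_q m q X)"
  using X0
proof (induction "nat \<lfloor>energy_q m q X\<rfloor>" arbitrary: X rule: less_induct)
  case less
  show ?case
  proof (cases "q_reduced m q X")
    case True thus ?thesis using lin_equiv_refl by blast
  next
    case False
    then obtain A where A: "A \<noteq> {}" "q \<notin> A" and afford: "\<forall>v\<in>A. int (outdeg m A v) \<le> X v"
      using not_reduced_affordable_set less.prems by blast
    let ?X' = "set_fire m A X"
    have drop: "energy_q m q ?X' \<le> energy_q m q X - 1"
      by (rule set_fire_energy[OF mg cn A afford])
    have "0 \<le> \<lfloor>energy_q m q ?X'\<rfloor>" using energy_q_nonneg[OF mg cn] by simp
    moreover have "\<lfloor>energy_q m q ?X'\<rfloor> \<le> \<lfloor>energy_q m q X\<rfloor> - 1"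
      using floor_mono[OF drop] by simp
    ultimately have smaller: "nat \<lfloor>energy_q m q ?X'\<rfloor> < nat \<lfloor>energy_q m q X\<rfloor>" by linarith
    have effective: "\<forall>v. v \<noteq> q \<longrightarrow> 0 \<le> ?X' v"
      by (rule set_fire_effective[OF less.prems afford])
    obtain R where R: "q_reduced m q R" "lin_equiv m R ?X'"
      and le: "energy_q m q R \<le> energy_q m q ?X'"
      using less.hyps[OF smaller effective] by (metis order.strict_implies_order order_refl)
    have "lin_equiv m R X" using lin_equiv_trans[OF R(2) set_fire_lin_equiv] .
    moreover have "energy_q m q R < energy_q m q X" using le drop by linarith
    ultimately show ?thesis using R(1) by blast
  qed
qed

theorem mainTheorem8:
  fixes m :: "'v::finite \<Rightarrow> 'v \<Rightarrow> nat" and q :: 'v and D :: "'v divisor"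
  assumes "multigraph m" and "connected_mg m"
  shows "q_reduced m q D \<longleftrightarrow>
    (D \<in> lin_system_q m q D \<and>
     (\<forall>D'\<in>lin_system_q m q D. D' \<noteq> D \<longrightarrow> energy_q m q D < energy_q m q D'))"
proof
  assume red: "q_reduced m q D"
  have "energy_q m q D < energy_q m q D'" if D': "D' \<in> lin_system_q m q D" "D' \<noteq> D" for D'
  proof -
    have "\<forall>v. v \<noteq> q \<longrightarrow> 0 \<le> D' v" using D'(1) by (simp add: lin_system_q_def)
    then obtain R where R: "q_reduced m q R" "lin_equiv m R D'"
      and descent: "R \<noteq> D' \<Longrightarrow> energy_q m q R < energy_q m q D'"
      using reduced_by_descent[OF assms] by blast
    have "R = D"
      using reduced_unique[OF red R(1)] lin_equiv_trans[OF R(2)] D'(1)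
      by (simp add: lin_system_q_def)
    thus ?thesis using descent D'(2) by blast
  qed
  moreover have "D \<in> lin_system_q m q D"
    using red by (simp add: lin_system_q_def lin_equiv_refl q_reduced_def)
  ultimately show "D \<in> lin_system_q m q D \<and>
     (\<forall>D'\<in>lin_system_q m q D. D' \<noteq> D \<longrightarrow> energy_q m q D < energy_q m q D')" by blast
next
  assume min: "D \<in> lin_system_q m q D \<and>
     (\<forall>D'\<in>lin_system_q m q D. D' \<noteq> D \<longrightarrow> energy_q m q D < energy_q m q D')"
  hence D0: "\<forall>v. v \<noteq> q \<longrightarrow> 0 \<le> D v" by (simp add: lin_system_q_def)
  show "q_reduced m q D"
  proof (rule ccontr)
    assume "\<not> q_reduced m q D"
    then obtain A where A: "A \<noteq> {}" "q \<notin> A" and afford: "\<forall>v\<in>A. int (outdeg m A v) \<le> D v"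
      using not_reduced_affordable_set D0 by blast
    have drop: "energy_q m q (set_fire m A D) \<le> energy_q m q D - 1"
      by (rule set_fire_energy[OF assms A afford])
    have "set_fire m A D \<in> lin_system_q m q D"
      using set_fire_effective[OF D0 afford] set_fire_lin_equiv by (simp add: lin_system_q_def)
    moreover have "set_fire m A D \<noteq> D" using drop by auto
    ultimately have "energy_q m q D < energy_q m q (set_fire m A D)"
      using min by blast
    with drop show False by linarith
  qed
qed

end
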